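(* Let $p$ be a fixed point in $\mathbb{S}_1^3$ and $\gamma=\gamma(t)$ a timelike unit speed curve in $\mathbb{S}_1^2\subset T_p\mathbb{S}_1^3$ with geodesic curvature $\kappa_\gamma$. For any nonzero function $\eta(t)$, let $\alpha(t)=\exp_p(\eta(t)\gamma(t))=\cos(\eta(t))p+\sin(\eta(t))\gamma(t)$ be a timelike regular curve in $\mathbb{S}_1^3$ with geodesic curvature $\kappa_g$. Then $$\kappa_\gamma^2\le\frac{\|\alpha'\|^4\kappa_g^2}{\sin^2(\eta)},$$ with equality holding identically if and only if $\alpha$ is a timelike rectifying curve in $\mathbb{S}_1^3$.
   Context: Minkowski 4-space $\mathbb{R}_1^4$ is $\mathbb{R}^4$ with $\langle x,y\rangle=-x_1y_1+x_2y_2+x_3y_3+x_4y_4$, $\|x\|=\sqrt{|\langle x,x\rangle|}$; $\alpha'=d\alpha/dt$. De Sitter 3-space $\mathbb{S}_1^3=\{x:\langle x,x\rangle=1\}$. $\mathbb{S}_1^2\subset T_p\mathbb{S}_1^3$ is $\{w:\langle w,p\rangle=0,\langle w,w\rangle=1\}$. For a timelike unit speed curve $\gamma$ in this $\mathbb{S}_1^2$, its geodesic curvature is $\kappa_\gamma=\det(\gamma,\gamma',\gamma'',p)$, and $\gamma''=\gamma+\kappa_\gamma N_\gamma$ with $N_\gamma=p\times\gamma\times\gamma'$ (formal determinant with first row $(-e_1,e_2,e_3,e_4)$). For a timelike curve $\alpha$ in $\mathbb{S}_1^3$ with arc length $s$: $T_\alpha=d\alpha/ds$, $\kappa_g=\|dT_\alpha/ds-\alpha\|$,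 $N_\alpha=(dT_\alpha/ds-\alpha)/\kappa_g$. Throughout, curves are assumed non-geodesic ($\kappa_g>0$) and non-planar (geodesic torsion $\neq0$). $\alpha$ is a timelike rectifying curve (with respect to $p\notin\mathrm{Im}(\alpha)$) if at each point $\alpha(s)$ the tangent vector of the geodesic of $\mathbb{S}_1^3$ joining $p$ and $\alpha(s)$ is pseudo-orthogonal to $N_\alpha(s)$. *)

theory Defs
  imports "HOL-Analysis.Analysis"
begin

definition mink :: "real^4 \<Rightarrow> real^4 \<Rightarrow> real" where
  "mink x y = - x$1 * y$1 + x$2 * y$2 + x$3 * y$3 + x$4 * y$4"

definition mnorm :: "real^4 \<Rightarrow> real" where
  "mnorm x = sqrt \<bar>mink x x\<bar>"

definition det4 :: "real^4 \<Rightarrow> real^4 \<Rightarrow> real^4 \<Rightarrow> real^4 \<Rightarrow> real" where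
  "det4 a b c d = det (vector [a, b, c, d] :: real^4^4)"

text \<open>Ternary cross product x \<times> y \<times> z: formal determinant with first row
  (-e1, e2, e3, e4) and rows x, y, z below it (cofactor expansion along the first row).\<close>
definition det3 :: "real \<Rightarrow> real \<Rightarrow> real \<Rightarrow> real \<Rightarrow> real \<Rightarrow> real \<Rightarrow> real \<Rightarrow> real \<Rightarrow> real \<Rightarrow> real" where
  "det3 a11 a12 a13 a21 a22 a23 a31 a32 a33 =
     a11 * (a22 * a33 - a23 * a32) - a12 * (a21 * a33 - a23 * a31) + a13 * (a21 * a32 - a22 * a31)"

definition cross4 :: "real^4 \<Rightarrow> real^4 \<Rightarrow> real^4 \<Rightarrow> real^4" where
  "cross4 x y z = vector [
     - det3 (x$2) (x$3) (x$4) (y$2) (y$3) (y$4) (z$2) (z$3) (z$4),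
     - det3 (x$1) (x$3) (x$4) (y$1) (y$3) (y$4) (z$1) (z$3) (z$4),
       det3 (x$1) (x$2) (x$4) (y$1) (y$2) (y$4) (z$1) (z$2) (z$4),
     - det3 (x$1) (x$2) (x$3) (y$1) (y$2) (y$3) (z$1) (z$2) (z$3)]"

abbreviation vd :: "(real \<Rightarrow> real^4) \<Rightarrow> real \<Rightarrow> real^4" where
  "vd f t \<equiv> vector_derivative f (at t)"

definition kappa_gamma :: "real^4 \<Rightarrow> (real \<Rightarrow> real^4) \<Rightarrow> real \<Rightarrow> real" where
  "kappa_gamma p \<gamma> t = det4 (\<gamma> t) (vd \<gamma> t) (vd (vd \<gamma>) t) p"

text \<open>Frenet apparatus of a timelike regular curve \<alpha> in S^3_1, given in an arbitrary
  regular parameter t; derivatives with respect to arc length s are d/ds = (1/\<parallel>\<alpha>'\<parallel>) d/dt.\<close>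
definition T_alpha :: "(real \<Rightarrow> real^4) \<Rightarrow> real \<Rightarrow> real^4" where
  "T_alpha \<alpha> t = (1 / mnorm (vd \<alpha> t)) *\<^sub>R vd \<alpha> t"

definition dds :: "(real \<Rightarrow> real^4) \<Rightarrow> (real \<Rightarrow> real^4) \<Rightarrow> real \<Rightarrow> real^4" where
  "dds \<alpha> F t = (1 / mnorm (vd \<alpha> t)) *\<^sub>R vd F t"

definition kappa_g :: "(real \<Rightarrow> real^4) \<Rightarrow> real \<Rightarrow> real" where
  "kappa_g \<alpha> t = mnorm (dds \<alpha> (T_alpha \<alpha>) t - \<alpha> t)"

definition N_alpha :: "(real \<Rightarrow> real^4) \<Rightarrow> real \<Rightarrow> real^4" where
  "N_alpha \<alpha> t = (1 / kappa_g \<alpha> t) *\<^sub>R (dds \<alpha> (T_alpha \<alpha>) t - \<alpha> t)"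

definition B_alpha :: "(real \<Rightarrow> real^4) \<Rightarrow> real \<Rightarrow> real^4" where
  "B_alpha \<alpha> t = cross4 (\<alpha> t) (T_alpha \<alpha> t) (N_alpha \<alpha> t)"

definition tau_g :: "(real \<Rightarrow> real^4) \<Rightarrow> real \<Rightarrow> real" where
  "tau_g \<alpha> t = mink (dds \<alpha> (N_alpha \<alpha>) t) (B_alpha \<alpha> t)"

text \<open>Timelike rectifying curve w.r.t. p: p is not on the curve and at every point the
  tangent vector at \<alpha>(t) of the geodesic of S^3_1 joining p and \<alpha>(t) is pseudo-orthogonal
  to N_\<alpha>(t).  That geodesic lies in the plane spanned by p and \<alpha>(t), so its tangent at
  \<alpha>(t) is (a multiple of) the component of p pseudo-orthogonal to \<alpha>(t).\<close>
definition rectifying :: "real^4 \<Rightarrow> (real \<Rightarrow> real^4) \<Rightarrow> real set \<Rightarrow> bool" where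
  "rectifying p \<alpha> I \<longleftrightarrow> p \<notin> \<alpha> ` I \<and>
     (\<forall>t\<in>I. mink (p - mink p (\<alpha> t) *\<^sub>R \<alpha> t) (N_alpha \<alpha> t) = 0)"

end

theory Submission imports Defs begin

(* Expand \<alpha>' and \<alpha>'' in the frame p, \<gamma>, \<gamma>', \<gamma>''.  Its Gram matrix is fixed except for
   <\<gamma>'',\<gamma>''> = 1 + \<kappa>\<^sub>\<gamma>^2, the latter because \<kappa>\<^sub>\<gamma>^2 = det(\<gamma>,\<gamma>',\<gamma>'',p)^2 is minus the Gram
   determinant.  With w = -<\<alpha>',\<alpha>'> = sin^2 \<eta> - \<eta>'^2 > 0, the vector
   X = \<kappa>\<^sub>g N\<^sub>\<alpha> = \<alpha>''/w + <\<alpha>',\<alpha>''> \<alpha>'/w^2 - \<alpha> satisfies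
     w^2 <X,X> = sin^2 \<eta> \<kappa>\<^sub>\<gamma>^2 + A^2/w   and   w^2 <p - <p,\<alpha>> \<alpha>, X> = - sin^2 \<eta> A
   with A = sin \<eta> (\<eta>'' + sin \<eta> cos \<eta>) - 2 \<eta>'^2 cos \<eta>.  The first identity is the inequality
   with defect A^2/(w sin^2 \<eta>); the second says that the defect vanishes exactly where \<alpha>
   is rectifying. *)

lemma vector_4 [simp]:
  "(vector [x, y, z, w] :: ('a::zero)^4) $ 1 = x"
  "(vector [x, y, z, w] :: ('a::zero)^4) $ 2 = y"
  "(vector [x, y, z, w] :: ('a::zero)^4) $ 3 = z"
  "(vector [x, y, z, w] :: ('a::zero)^4) $ 4 = w"
  unfolding vector_def by simp_all

lemma mink_sym: "mink x y = mink y x"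
  by (simp add: mink_def algebra_simps)

lemma bounded_bilinear_mink: "bounded_bilinear mink"
proof
  fix a a' b b' :: "real^4" and r :: real
  show "mink (a + a') b = mink a b + mink a' b" "mink a (b + b') = mink a b + mink a b'"
    "mink (r *\<^sub>R a) b = r *\<^sub>R mink a b" "mink a (r *\<^sub>R b) = r *\<^sub>R mink a b"
    by (simp_all add: mink_def algebra_simps)
next
  have "norm (mink a b) \<le> norm a * norm b * 4" for a b :: "real^4"
  proof -
    have entry: "\<bar>a $ i * b $ i\<bar> \<le> norm a * norm b" for i
      by (simp add: abs_mult mult_mono' component_le_norm_cart)
    have "norm (mink a b) \<le> \<bar>a$1 * b$1\<bar> + \<bar>a$2 * b$2\<bar> + \<bar>a$3 * b$3\<bar> + \<bar>a$4 * b$4\<bar>"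
      unfolding mink_def real_norm_def by linarith
    then show ?thesis
      using entry[of 1] entry[of 2] entry[of 3] entry[of 4] by linarith
  qed
  then show "\<exists>K. \<forall>a b. norm (mink a b) \<le> norm a * norm b * K" by blast
qed

interpretation mink: bounded_bilinear mink
  by (rule bounded_bilinear_mink)

declare mink.zero_left [simp] mink.zero_right [simp]

lemmas mink_linear = mink.add_left mink.add_right mink.diff_left mink.diff_right
  mink.scaleR_left mink.scaleR_right

lemma mink_has_real_derivative:
  assumes "(f has_vector_derivative f') (at t)" "(g has_vector_derivative g') (at t)"
  shows "((\<lambda>y. mink (f y) (g y)) has_real_derivative mink (f t) g' + mink f' (g t)) (at t)"
  using mink.has_vector_derivative[OF assms] by (simp add: has_real_derivative_iff_has_vector_derivative)

lemma mink_derivative_eq_0_if_constant: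
  assumes "open I" "t \<in> I"
    and f: "(f has_vector_derivative f') (at t)" and g: "(g has_vector_derivative g') (at t)"
    and const: "\<And>y. y \<in> I \<Longrightarrow> mink (f y) (g y) = k"
  shows "mink (f t) g' + mink f' (g t) = 0"
proof -
  have "((\<lambda>y. mink (f y) (g y)) has_real_derivative mink (f t) g' + mink f' (g t)) (at t)"
    by (rule mink_has_real_derivative[OF f g])
  then have "((\<lambda>y. k) has_real_derivative mink (f t) g' + mink f' (g t)) (at t)"
    by (rule has_field_derivative_transform_within_open[OF _ assms(1,2)]) (simp add: const)
  then show ?thesis
    using DERIV_const DERIV_unique by blast
qed

lemma prod_4: "prod f (UNIV :: 4 set) = f 1 * f 2 * f 3 * f 4"
  unfolding UNIV_4 by (simp add: ac_simps)

definition mink_matrix :: "real^4^4" where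
  "mink_matrix = (\<chi> i j. if i = j then (if i = 1 then -1 else 1) else 0)"

lemma det_mink_matrix: "det mink_matrix = -1"
proof -
  have "det mink_matrix = (\<Prod>i\<in>UNIV. mink_matrix $ i $ i)"
    by (rule det_diagonal) (simp add: mink_matrix_def)
  also have "\<dots> = -1"
    by (simp add: prod_4 mink_matrix_def)
  finally show ?thesis .
qed

lemma gram_matrix_mink: "(M ** mink_matrix ** transpose M) $ i $ j = mink (M $ i) (M $ j)"
proof -
  have "(M ** mink_matrix) $ i $ k = M $ i $ k * (if k = 1 then -1 else 1)" for k
  proof -
    have "(M ** mink_matrix) $ i $ k = (\<Sum>l\<in>UNIV. if l = k then M $ i $ l * (if k = 1 then -1 else 1) else 0)"
      unfolding matrix_matrix_mult_def mink_matrix_def vec_lambda_beta by (intro sum.cong refl) auto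
    then show ?thesis by simp
  qed
  then show ?thesis
    by (simp add: matrix_matrix_mult_def[of "M ** mink_matrix"] transpose_def sum_4 mink_def)
qed

lemma det4_square_pseudo_orthogonal:
  assumes "mink a b = 0" "mink a c = 0" "mink a d = 0" "mink b c = 0" "mink b d = 0" "mink c d = 0"
  shows "(det4 a b c d)\<^sup>2 = - (mink a a * mink b b * mink c c * mink d d)"
proof -
  define M where "M = (vector [a, b, c, d] :: real^4^4)"
  have "det (M ** mink_matrix ** transpose M) = (\<Prod>i\<in>UNIV. (M ** mink_matrix ** transpose M) $ i $ i)"
  proof (rule det_diagonal)
    show "(M ** mink_matrix ** transpose M) $ i $ j = 0" if "i \<noteq> j" for i j
      using that assms exhaust_4[of i] exhaust_4[of j] mink_sym
      unfolding gram_matrix_mink M_def by auto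
  qed
  also have "\<dots> = mink a a * mink b b * mink c c * mink d d"
    by (simp add: prod_4 gram_matrix_mink M_def)
  finally show ?thesis
    by (simp add: det_mul det_mink_matrix det4_def M_def power2_eq_square)
qed

lemma det4_add_first_to_third: "det4 a b (c + k *\<^sub>R a) d = det4 a b c d"
proof -
  let ?M = "vector [a, b, c, d] :: real^4^4"
  have "(\<chi> i. if i = 3 then row 3 ?M + k *s row 1 ?M else row i ?M) = vector [a, b, c + k *\<^sub>R a, d]"
    by (simp add: vec_eq_iff forall_4 row_def vector_scalar_mult_def)
  then show ?thesis
    using det_row_operation[of 3 1 ?M k] by (simp add: det4_def)
qed

(* The Gram table of (p, \<gamma>, \<gamma>', \<gamma>'') for a timelike unit speed curve \<gamma> in S^2_1 \<subseteq> T_p S^3_1;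
   the only free entry is <\<gamma>'',\<gamma>''> = 1 + \<kappa>\<^sub>\<gamma>^2. *)
definition S12_frame :: "real^4 \<Rightarrow> real^4 \<Rightarrow> real^4 \<Rightarrow> real^4 \<Rightarrow> bool" where
  "S12_frame P G H K \<longleftrightarrow> mink P P = 1 \<and> mink P G = 0 \<and> mink P H = 0 \<and> mink P K = 0
     \<and> mink G G = 1 \<and> mink G H = 0 \<and> mink G K = 1 \<and> mink H H = -1 \<and> mink H K = 0"

lemma S12_frame_mink:
  assumes "S12_frame P G H K"
  shows "mink P P = 1" "mink P G = 0" "mink P H = 0" "mink P K = 0"
    "mink G P = 0" "mink G G = 1" "mink G H = 0" "mink G K = 1"
    "mink H P = 0" "mink H G = 0" "mink H H = -1" "mink H K = 0"
    "mink K P = 0" "mink K G = 1" "mink K H = 0"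
  using assms mink_sym[of G P] mink_sym[of H P] mink_sym[of K P] mink_sym[of H G]
    mink_sym[of K G] mink_sym[of K H]
  unfolding S12_frame_def by simp_all

lemma det4_square_S12_frame:
  assumes "S12_frame P G H K"
  shows "(det4 G H K P)\<^sup>2 = mink K K - 1"
proof -
  have "det4 G H K P = det4 G H (K + (-1) *\<^sub>R G) P"
    by (rule det4_add_first_to_third[symmetric])
  also have "(\<dots>)\<^sup>2 = mink K K - 1"
    using S12_frame_mink[OF assms]
    by (subst det4_square_pseudo_orthogonal) (simp_all add: mink_linear)
  finally show ?thesis .
qed

lemma dds_T_alpha_timelike:
  assumes I: "open I" "t \<in> I"
    and vel: "\<And>y. y \<in> I \<Longrightarrow> (\<alpha> has_vector_derivative v y) (at y)"
    and acc: "(v has_vector_derivative a) (at t)"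
    and timelike: "\<And>y. y \<in> I \<Longrightarrow> mink (v y) (v y) < 0"
  shows "dds \<alpha> (T_alpha \<alpha>) t
    = (1 / - mink (v t) (v t)) *\<^sub>R a + (mink (v t) a / (mink (v t) (v t))\<^sup>2) *\<^sub>R v t"
proof -
  define w where "w = - mink (v t) (v t)"
  have w: "w > 0" "sqrt w > 0"
    using timelike[OF I(2)] by (simp_all add: w_def)
  have vd_\<alpha>: "vd \<alpha> y = v y" if "y \<in> I" for y
    using vel[OF that] by (rule vector_derivative_at)
  have "((\<lambda>y. 1 / sqrt (- mink (v y) (v y))) has_real_derivative mink (v t) a / (w * sqrt w)) (at t)"
    using w mink_has_real_derivative[OF acc acc]
    by (auto intro!: derivative_eq_intros simp: w_def mink_sym[of a] field_simps power2_eq_square)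
  from has_vector_derivative_scaleR[OF this acc]
  have "(T_alpha \<alpha> has_vector_derivative
      (1 / sqrt w) *\<^sub>R a + (mink (v t) a / (w * sqrt w)) *\<^sub>R v t) (at t)"
    unfolding w_def
    by (rule has_vector_derivative_transform_within_open[OF _ I])
      (simp add: T_alpha_def mnorm_def vd_\<alpha> timelike abs_of_neg)
  then have "vd (T_alpha \<alpha>) t = (1 / sqrt w) *\<^sub>R a + (mink (v t) a / (w * sqrt w)) *\<^sub>R v t"
    by (rule vector_derivative_at)
  moreover have "mnorm (vd \<alpha> t) = sqrt w"
    using timelike[OF I(2)] by (simp add: mnorm_def vd_\<alpha>[OF I(2)] w_def)
  moreover have "(mink (v t) (v t))\<^sup>2 = w\<^sup>2"
    by (simp add: w_def)
  ultimately show ?thesis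
    using w by (simp add: dds_def w_def[symmetric] scaleR_add_right field_simps power2_eq_square)
qed

(* For x = \<alpha> t, v = \<alpha>', a = \<alpha>'' of a timelike curve in S^3_1, X = \<kappa>\<^sub>g N\<^sub>\<alpha>
   by dds_T_alpha_timelike. *)
lemma mink_principal_normal:
  assumes "mink x x = 1" "mink x v = 0" "mink x a = w" "mink v v = - w" "w \<noteq> 0"
  defines "X \<equiv> (1 / w) *\<^sub>R a + (mink v a / w\<^sup>2) *\<^sub>R v - x"
  shows "mink X X = mink a a / w\<^sup>2 + (mink v a)\<^sup>2 / w ^ 3 - 1"
    and "mink (y - mink y x *\<^sub>R x) X = mink y a / w + mink v a * mink y v / w\<^sup>2 - mink y x"
  using assms mink_sym[of a x] mink_sym[of v x] mink_sym[of a v]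
  by (simp_all add: X_def mink_linear field_simps power2_eq_square power3_eq_cube)

lemma exp_curve_normal_algebra:
  fixes sn cs e1 e2 g w :: real
  assumes trig: "sn\<^sup>2 + cs\<^sup>2 = 1" and w: "w = sn\<^sup>2 - e1\<^sup>2" "w \<noteq> 0"
  defines "A \<equiv> sn * (e2 + sn * cs) - 2 * cs * e1\<^sup>2"
  shows "w\<^sup>2 * ((e2\<^sup>2 + e1 ^ 4 - 4 * e1\<^sup>2 * cs\<^sup>2 + g * sn\<^sup>2 + 2 * e2 * sn * cs - 2 * e1\<^sup>2 * sn\<^sup>2) / w\<^sup>2
      + (e1 * (e2 - sn * cs))\<^sup>2 / w ^ 3 - 1) = sn\<^sup>2 * (g - 1) + A\<^sup>2 / w"
    and "w\<^sup>2 * ((- e2 * sn - e1\<^sup>2 * cs) / w + e1 * (e2 - sn * cs) * (- e1 * sn) / w\<^sup>2 - cs)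
      = - sn\<^sup>2 * A"
proof -
  have "cs\<^sup>2 = 1 - sn\<^sup>2"
    using trig by simp
  then show "w\<^sup>2 * ((e2\<^sup>2 + e1 ^ 4 - 4 * e1\<^sup>2 * cs\<^sup>2 + g * sn\<^sup>2 + 2 * e2 * sn * cs - 2 * e1\<^sup>2 * sn\<^sup>2) / w\<^sup>2
      + (e1 * (e2 - sn * cs))\<^sup>2 / w ^ 3 - 1) = sn\<^sup>2 * (g - 1) + A\<^sup>2 / w"
    using w unfolding A_def by (simp add: field_simps power2_eq_square power3_eq_cube) algebra
  show "w\<^sup>2 * ((- e2 * sn - e1\<^sup>2 * cs) / w + e1 * (e2 - sn * cs) * (- e1 * sn) / w\<^sup>2 - cs)
      = - sn\<^sup>2 * A"
    using w trig unfolding A_def by (simp add: field_simps power2_eq_square) algebra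
qed

locale S12_curve =
  fixes p :: "real^4" and \<gamma> \<gamma>1 \<gamma>2 :: "real \<Rightarrow> real^4" and I :: "real set"
  assumes open_I: "open I"
    and p_unit: "mink p p = 1"
    and \<gamma>_deriv: "\<And>t. t \<in> I \<Longrightarrow> (\<gamma> has_vector_derivative \<gamma>1 t) (at t)"
    and \<gamma>1_deriv: "\<And>t. t \<in> I \<Longrightarrow> (\<gamma>1 has_vector_derivative \<gamma>2 t) (at t)"
    and \<gamma>_S12: "\<And>t. t \<in> I \<Longrightarrow> mink (\<gamma> t) p = 0 \<and> mink (\<gamma> t) (\<gamma> t) = 1"
    and \<gamma>_timelike_unit: "\<And>t. t \<in> I \<Longrightarrow> mink (\<gamma>1 t) (\<gamma>1 t) = -1"
begin

lemma frame:
  assumes t: "t \<in> I"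
  shows "S12_frame p (\<gamma> t) (\<gamma>1 t) (\<gamma>2 t)"
proof -
  note zero_deriv = mink_derivative_eq_0_if_constant[OF open_I]
  note const = has_vector_derivative_const[of p]
  have \<gamma>1_p: "mink (\<gamma>1 y) p = 0" if "y \<in> I" for y
    using zero_deriv[OF that \<gamma>_deriv[OF that] const, of 0] \<gamma>_S12 by simp
  have \<gamma>_\<gamma>1: "mink (\<gamma> y) (\<gamma>1 y) = 0" if "y \<in> I" for y
    using zero_deriv[OF that \<gamma>_deriv[OF that] \<gamma>_deriv[OF that], of 1] \<gamma>_S12 mink_sym[of "\<gamma>1 y"]
    by simp
  have "mink (\<gamma>2 t) p = 0"
    using zero_deriv[OF t \<gamma>1_deriv[OF t] const, of 0] \<gamma>1_p by simp
  moreover have "mink (\<gamma> t) (\<gamma>2 t) = 1"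
    using zero_deriv[OF t \<gamma>_deriv[OF t] \<gamma>1_deriv[OF t], of 0] \<gamma>_\<gamma>1 \<gamma>_timelike_unit[OF t] by simp
  moreover have "mink (\<gamma>1 t) (\<gamma>2 t) = 0"
    using zero_deriv[OF t \<gamma>1_deriv[OF t] \<gamma>1_deriv[OF t], of "-1"] \<gamma>_timelike_unit mink_sym[of "\<gamma>2 t"]
    by simp
  ultimately show ?thesis
    using p_unit \<gamma>_S12[OF t] \<gamma>1_p[OF t] \<gamma>_\<gamma>1[OF t] \<gamma>_timelike_unit[OF t]
      mink_sym[of p "\<gamma> t"] mink_sym[of p "\<gamma>1 t"] mink_sym[of p "\<gamma>2 t"]
    by (simp add: S12_frame_def)
qed

lemma kappa_gamma_square:
  assumes t: "t \<in> I"
  shows "(kappa_gamma p \<gamma> t)\<^sup>2 = mink (\<gamma>2 t) (\<gamma>2 t) - 1"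
proof -
  have vd_\<gamma>: "vd \<gamma> y = \<gamma>1 y" if "y \<in> I" for y
    using \<gamma>_deriv[OF that] by (rule vector_derivative_at)
  have "(vd \<gamma> has_vector_derivative \<gamma>2 t) (at t)"
    by (rule has_vector_derivative_transform_within_open[OF \<gamma>1_deriv[OF t] open_I t]) (simp add: vd_\<gamma>)
  then have "vd (vd \<gamma>) t = \<gamma>2 t"
    by (rule vector_derivative_at)
  then have "kappa_gamma p \<gamma> t = det4 (\<gamma> t) (\<gamma>1 t) (\<gamma>2 t) p"
    by (simp add: kappa_gamma_def vd_\<gamma>[OF t])
  then show ?thesis
    using det4_square_S12_frame[OF frame[OF t]] by simp
qed

end

locale exp_curve = S12_curve +
  fixes \<eta> \<eta>1 \<eta>2 :: "real \<Rightarrow> real" and \<alpha> :: "real \<Rightarrow> real^4"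
  assumes \<eta>_deriv: "\<And>t. t \<in> I \<Longrightarrow> (\<eta> has_real_derivative \<eta>1 t) (at t)"
    and \<eta>1_deriv: "\<And>t. t \<in> I \<Longrightarrow> (\<eta>1 has_real_derivative \<eta>2 t) (at t)"
    and \<alpha>_def: "\<alpha> = (\<lambda>t. cos (\<eta> t) *\<^sub>R p + sin (\<eta> t) *\<^sub>R \<gamma> t)"
    and \<alpha>_timelike: "\<And>t. t \<in> I \<Longrightarrow> mink (vd \<alpha> t) (vd \<alpha> t) < 0"
begin

definition velocity :: "real \<Rightarrow> real^4" where
  "velocity t = \<eta>1 t *\<^sub>R (cos (\<eta> t) *\<^sub>R \<gamma> t - sin (\<eta> t) *\<^sub>R p) + sin (\<eta> t) *\<^sub>R \<gamma>1 t"

definition acceleration :: "real \<Rightarrow> real^4" where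
  "acceleration t = \<eta>2 t *\<^sub>R (cos (\<eta> t) *\<^sub>R \<gamma> t - sin (\<eta> t) *\<^sub>R p) - (\<eta>1 t)\<^sup>2 *\<^sub>R \<alpha> t
     + (2 * \<eta>1 t * cos (\<eta> t)) *\<^sub>R \<gamma>1 t + sin (\<eta> t) *\<^sub>R \<gamma>2 t"

lemma has_vector_derivative_alpha: "t \<in> I \<Longrightarrow> (\<alpha> has_vector_derivative velocity t) (at t)"
  unfolding \<alpha>_def velocity_def
  by (auto intro!: derivative_eq_intros \<eta>_deriv \<gamma>_deriv simp: algebra_simps)

lemma has_vector_derivative_velocity:
  "t \<in> I \<Longrightarrow> (velocity has_vector_derivative acceleration t) (at t)"
  unfolding velocity_def[abs_def] acceleration_def
  unfolding \<alpha>_def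
  by (auto intro!: derivative_eq_intros \<eta>_deriv \<eta>1_deriv \<gamma>_deriv \<gamma>1_deriv
      simp: vec_eq_iff algebra_simps power2_eq_square)

lemma velocity_timelike: "t \<in> I \<Longrightarrow> mink (velocity t) (velocity t) < 0"
  using \<alpha>_timelike vector_derivative_at[OF has_vector_derivative_alpha] by simp

lemma mink_frame_expansions:
  assumes t: "t \<in> I"
  defines "sn \<equiv> sin (\<eta> t)" and "cs \<equiv> cos (\<eta> t)" and "e1 \<equiv> \<eta>1 t" and "e2 \<equiv> \<eta>2 t"
    and "v \<equiv> velocity t" and "a \<equiv> acceleration t" and "g \<equiv> mink (\<gamma>2 t) (\<gamma>2 t)"
  shows "mink (\<alpha> t) (\<alpha> t) = 1" "mink (\<alpha> t) v = 0" "mink (\<alpha> t) a = sn\<^sup>2 - e1\<^sup>2"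
    "mink v v = e1\<^sup>2 - sn\<^sup>2" "mink v a = e1 * (e2 - sn * cs)"
    "mink a a = e2\<^sup>2 + e1 ^ 4 - 4 * e1\<^sup>2 * cs\<^sup>2 + g * sn\<^sup>2 + 2 * e2 * sn * cs - 2 * e1\<^sup>2 * sn\<^sup>2"
    "mink p (\<alpha> t) = cs" "mink p v = - e1 * sn" "mink p a = - e2 * sn - e1\<^sup>2 * cs"
  unfolding v_def a_def velocity_def acceleration_def g_def
  unfolding \<alpha>_def
  using sin_cos_squared_add[of "\<eta> t"] S12_frame_mink[OF frame[OF t]]
  by (simp_all add: mink_linear sn_def[symmetric] cs_def[symmetric] e1_def[symmetric]
      e2_def[symmetric] algebra_simps power2_eq_square power4_eq_xxxx; algebra)+

lemma sin_eta_nonzero: "t \<in> I \<Longrightarrow> sin (\<eta> t) \<noteq> 0"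
  using velocity_timelike mink_frame_expansions(4) by fastforce

lemma principal_normal_identities:
  assumes t: "t \<in> I"
  defines "w \<equiv> (sin (\<eta> t))\<^sup>2 - (\<eta>1 t)\<^sup>2"
    and "A \<equiv> sin (\<eta> t) * (\<eta>2 t + sin (\<eta> t) * cos (\<eta> t)) - 2 * cos (\<eta> t) * (\<eta>1 t)\<^sup>2"
    and "X \<equiv> dds \<alpha> (T_alpha \<alpha>) t - \<alpha> t"
  shows "w > 0"
    and "w\<^sup>2 * mink X X = (sin (\<eta> t))\<^sup>2 * (kappa_gamma p \<gamma> t)\<^sup>2 + A\<^sup>2 / w"
    and "w\<^sup>2 * mink (p - mink p (\<alpha> t) *\<^sub>R \<alpha> t) X = - (sin (\<eta> t))\<^sup>2 * A"
proof -
  note E = mink_frame_expansions[OF t]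
  show w: "w > 0"
    using velocity_timelike[OF t] E(4) by (simp add: w_def)
  have frenet: "mink (\<alpha> t) (\<alpha> t) = 1" "mink (\<alpha> t) (velocity t) = 0"
    "mink (\<alpha> t) (acceleration t) = w" "mink (velocity t) (velocity t) = - w" "w \<noteq> 0"
    using E(1-4) w by (simp_all add: w_def)
  have X_eq: "X = (1 / w) *\<^sub>R acceleration t
      + (mink (velocity t) (acceleration t) / w\<^sup>2) *\<^sub>R velocity t - \<alpha> t"
    using dds_T_alpha_timelike[OF open_I t has_vector_derivative_alpha
        has_vector_derivative_velocity[OF t] velocity_timelike] frenet(4)
    by (simp add: X_def)
  show "w\<^sup>2 * mink X X = (sin (\<eta> t))\<^sup>2 * (kappa_gamma p \<gamma> t)\<^sup>2 + A\<^sup>2 / w"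
    unfolding X_eq mink_principal_normal(1)[OF frenet]
    unfolding E(5,6) A_def kappa_gamma_square[OF t]
    by (rule exp_curve_normal_algebra(1)) (use frenet(5) in \<open>simp_all add: w_def\<close>)
  show "w\<^sup>2 * mink (p - mink p (\<alpha> t) *\<^sub>R \<alpha> t) X = - (sin (\<eta> t))\<^sup>2 * A"
    unfolding X_eq mink_principal_normal(2)[OF frenet]
    unfolding E(5,7-9) A_def
    by (rule exp_curve_normal_algebra(2)) (use frenet(5) in \<open>simp_all add: w_def\<close>)
qed

lemma curvature_defect:
  assumes t: "t \<in> I" and non_geodesic: "kappa_g \<alpha> t > 0"
  obtains c where "mnorm (vd \<alpha> t) ^ 4 * (kappa_g \<alpha> t)\<^sup>2 / (sin (\<eta> t))\<^sup>2 = (kappa_gamma p \<gamma> t)\<^sup>2 + c\<^sup>2"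
    and "mink (p - mink p (\<alpha> t) *\<^sub>R \<alpha> t) (N_alpha \<alpha> t) = 0 \<longleftrightarrow> c = 0"
proof -
  define w where "w = (sin (\<eta> t))\<^sup>2 - (\<eta>1 t)\<^sup>2"
  define A where "A = sin (\<eta> t) * (\<eta>2 t + sin (\<eta> t) * cos (\<eta> t)) - 2 * cos (\<eta> t) * (\<eta>1 t)\<^sup>2"
  define X where "X = dds \<alpha> (T_alpha \<alpha>) t - \<alpha> t"
  note identities = principal_normal_identities[OF t, folded w_def A_def X_def]
  note w = identities(1) and sn = sin_eta_nonzero[OF t]
  have "w\<^sup>2 * mink X X \<ge> 0"
    unfolding identities(2) using w by simp
  then have kappa_g_sq: "(kappa_g \<alpha> t)\<^sup>2 = mink X X"
    using w by (simp add: kappa_g_def mnorm_def X_def[symmetric] zero_le_mult_iff)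
  have "mink (vd \<alpha> t) (vd \<alpha> t) = - w"
    using vector_derivative_at[OF has_vector_derivative_alpha[OF t]] mink_frame_expansions(4)[OF t]
    by (simp add: w_def)
  then have speed: "mnorm (vd \<alpha> t) ^ 4 = w\<^sup>2"
    using w by (simp add: mnorm_def power4_eq_xxxx power2_eq_square)
  show ?thesis
  proof
    show "mnorm (vd \<alpha> t) ^ 4 * (kappa_g \<alpha> t)\<^sup>2 / (sin (\<eta> t))\<^sup>2
        = (kappa_gamma p \<gamma> t)\<^sup>2 + (A / (sqrt w * sin (\<eta> t)))\<^sup>2"
      unfolding speed kappa_g_sq identities(2)
      using w sn by (simp add: field_simps power_mult_distrib)
    have "mink (p - mink p (\<alpha> t) *\<^sub>R \<alpha> t) X = - (sin (\<eta> t))\<^sup>2 * A / w\<^sup>2"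
      using identities(3) w by (simp add: field_simps)
    then have "mink (p - mink p (\<alpha> t) *\<^sub>R \<alpha> t) (N_alpha \<alpha> t)
        = - (sin (\<eta> t))\<^sup>2 * A / (w\<^sup>2 * kappa_g \<alpha> t)"
      by (simp add: N_alpha_def X_def[symmetric] mink.scaleR_right)
    then show "mink (p - mink p (\<alpha> t) *\<^sub>R \<alpha> t) (N_alpha \<alpha> t) = 0
        \<longleftrightarrow> A / (sqrt w * sin (\<eta> t)) = 0"
      using w sn non_geodesic by simp
  qed
qed

lemma alpha_ne_p:
  assumes t: "t \<in> I"
  shows "\<alpha> t \<noteq> p"
proof
  assume "\<alpha> t = p"
  moreover have "mink (\<alpha> t) (\<gamma> t) = sin (\<eta> t)"
    using S12_frame_mink[OF frame[OF t]] by (simp add: \<alpha>_def mink_linear)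
  ultimately show False
    using S12_frame_mink(2)[OF frame[OF t]] sin_eta_nonzero[OF t] by simp
qed

end

theorem theorem3p5:
  fixes p :: "real^4" and \<gamma> \<gamma>1 \<gamma>2 \<gamma>3 :: "real \<Rightarrow> real^4"
    and \<eta> \<eta>1 \<eta>2 \<eta>3 :: "real \<Rightarrow> real" and I :: "real set"
    and \<alpha> :: "real \<Rightarrow> real^4"
  assumes I: "open I" "is_interval I" "I \<noteq> {}"
    and p: "mink p p = 1"
    and d\<gamma>: "\<And>t. t \<in> I \<Longrightarrow> (\<gamma> has_vector_derivative \<gamma>1 t) (at t)"
              "\<And>t. t \<in> I \<Longrightarrow> (\<gamma>1 has_vector_derivative \<gamma>2 t) (at t)"
              "\<And>t. t \<in> I \<Longrightarrow> (\<gamma>2 has_vector_derivative \<gamma>3 t) (at t)"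
    and \<gamma>_S12: "\<And>t. t \<in> I \<Longrightarrow> mink (\<gamma> t) p = 0 \<and> mink (\<gamma> t) (\<gamma> t) = 1"
    and \<gamma>_timelike_unit: "\<And>t. t \<in> I \<Longrightarrow> mink (\<gamma>1 t) (\<gamma>1 t) = -1"
    and d\<eta>: "\<And>t. t \<in> I \<Longrightarrow> (\<eta> has_real_derivative \<eta>1 t) (at t)"
              "\<And>t. t \<in> I \<Longrightarrow> (\<eta>1 has_real_derivative \<eta>2 t) (at t)"
              "\<And>t. t \<in> I \<Longrightarrow> (\<eta>2 has_real_derivative \<eta>3 t) (at t)"
    and \<eta>_nonzero: "\<And>t. t \<in> I \<Longrightarrow> \<eta> t \<noteq> 0"
    and \<alpha>_def: "\<alpha> = (\<lambda>t. cos (\<eta> t) *\<^sub>R p + sin (\<eta> t) *\<^sub>R \<gamma> t)"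
    and \<alpha>_timelike: "\<And>t. t \<in> I \<Longrightarrow> mink (vd \<alpha> t) (vd \<alpha> t) < 0"
    and non_geodesic: "\<And>t. t \<in> I \<Longrightarrow> kappa_g \<alpha> t > 0"
    and non_planar: "\<And>t. t \<in> I \<Longrightarrow> tau_g \<alpha> t \<noteq> 0"
  shows "(\<forall>t\<in>I. (kappa_gamma p \<gamma> t)\<^sup>2
                   \<le> mnorm (vd \<alpha> t) ^ 4 * (kappa_g \<alpha> t)\<^sup>2 / (sin (\<eta> t))\<^sup>2)
       \<and> ((\<forall>t\<in>I. (kappa_gamma p \<gamma> t)\<^sup>2
                   = mnorm (vd \<alpha> t) ^ 4 * (kappa_g \<alpha> t)\<^sup>2 / (sin (\<eta> t))\<^sup>2)
          \<longleftrightarrow> rectifying p \<alpha> I)"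
proof -
  interpret exp_curve p \<gamma> \<gamma>1 \<gamma>2 I \<eta> \<eta>1 \<eta>2 \<alpha>
    by (unfold_locales; use I(1) p d\<gamma>(1,2) \<gamma>_S12 \<gamma>_timelike_unit d\<eta>(1,2) \<alpha>_def \<alpha>_timelike in blast)
  have "(kappa_gamma p \<gamma> t)\<^sup>2 \<le> mnorm (vd \<alpha> t) ^ 4 * (kappa_g \<alpha> t)\<^sup>2 / (sin (\<eta> t))\<^sup>2
      \<and> ((kappa_gamma p \<gamma> t)\<^sup>2 = mnorm (vd \<alpha> t) ^ 4 * (kappa_g \<alpha> t)\<^sup>2 / (sin (\<eta> t))\<^sup>2
          \<longleftrightarrow> mink (p - mink p (\<alpha> t) *\<^sub>R \<alpha> t) (N_alpha \<alpha> t) = 0)" if t: "t \<in> I" for t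
  proof -
    obtain c where "mnorm (vd \<alpha> t) ^ 4 * (kappa_g \<alpha> t)\<^sup>2 / (sin (\<eta> t))\<^sup>2 = (kappa_gamma p \<gamma> t)\<^sup>2 + c\<^sup>2"
      and "mink (p - mink p (\<alpha> t) *\<^sub>R \<alpha> t) (N_alpha \<alpha> t) = 0 \<longleftrightarrow> c = 0"
      using curvature_defect[OF t non_geodesic[OF t]] .
    then show ?thesis
      by simp
  qed
  then show ?thesis
    using alpha_ne_p unfolding rectifying_def by blast
qed

end
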